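(* Let $f\in\mathbb{Z}[[x]]$ with $f(0)=0$, $f'(0)\in\{1,-1\}$, let $\rho,\sigma,\pi\in\mathbb{Z}$, and set $$g(x)=\left(\frac{f(x)}{x}\right)^{\rho}\big(f'(x)\big)^{\sigma}\left(\frac{f(x)-1}{x-1}\right)^{\pi}.$$ Suppose the Riordan array $\upsilon_f[\rho,\sigma,\pi]=(g(x),f(x))$ is an involution. Then the almost Riordan array $$\left(\left(\frac{f(x)}{x}\right)^{\rho-1}\big(f'(x)\big)^{\sigma}\left(\frac{f(x)-1}{x-1}\right)^{\pi};\ g(x),\ f(x)\right)$$ is also an involution in the group of almost Riordan arrays of first order.
   Context: All matrices are infinite lower-triangular with rows and columns indexed by $n,k\ge0$. $[x^n]h(x)$ denotes the coefficient of $x^n$ in $h$. The Riordan array $(g,f)$ is the matrix with entries $[x^n]g(x)f(x)^k$; it is an involution if $(g,f)^2=(1,x)$, equivalently $g(x)g(f(x))=1$ and $f(f(x))=x$. An almost Riordan array of first order $(a;g,f)$ has associated matrix $M$ with $M_{0,0}=a_0$, $M_{0,k}=0$ for $k\ge1$, $M_{n,0}=a_n$ for $n\ge1$, and $M_{n,k}=[x^{n-1}]\,g(x)f(x)^{k-1}$ for $n,k\ge1$; it is an involution if $M^2=I$. *)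

theory Defs
  imports "HOL-Computational_Algebra.Formal_Power_Series"
begin

text \<open>Infinite lower-triangular matrices, indexed by n,k \<ge> 0, as functions.
  Product of lower-triangular matrices: (A B)_{n,k} = sum over j \<le> n of A_{n,j} B_{j,k}
  (the remaining terms vanish since A is lower triangular).\<close>

definition lt_mult :: "(nat \<Rightarrow> nat \<Rightarrow> 'a::comm_ring_1) \<Rightarrow> (nat \<Rightarrow> nat \<Rightarrow> 'a) \<Rightarrow> nat \<Rightarrow> nat \<Rightarrow> 'a" where
  "lt_mult A B = (\<lambda>n k. \<Sum>j\<le>n. A n j * B j k)"

definition lt_id :: "nat \<Rightarrow> nat \<Rightarrow> 'a::comm_ring_1" where
  "lt_id = (\<lambda>n k. if n = k then 1 else 0)"

definition riordan_matrix :: "'a::comm_ring_1 fps \<Rightarrow> 'a fps \<Rightarrow> nat \<Rightarrow> nat \<Rightarrow> 'a" where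
  "riordan_matrix g f = (\<lambda>n k. fps_nth (g * f ^ k) n)"

definition almost_riordan_matrix :: "'a::comm_ring_1 fps \<Rightarrow> 'a fps \<Rightarrow> 'a fps \<Rightarrow> nat \<Rightarrow> nat \<Rightarrow> 'a" where
  "almost_riordan_matrix a g f = (\<lambda>n k.
     if k = 0 then fps_nth a n
     else if n = 0 then 0
     else fps_nth (g * f ^ (k - 1)) (n - 1))"

definition is_involution :: "(nat \<Rightarrow> nat \<Rightarrow> 'a::comm_ring_1) \<Rightarrow> bool" where
  "is_involution M \<longleftrightarrow> lt_mult M M = lt_id"

end

theory Submission
  imports Defs
begin

text \<open>The Riordan array (g, f) acts on generating functions by h \<mapsto> g (h \<circ> f), so
  (g, f) is an involution iff g (g \<circ> f) = 1 and f \<circ> f = x. Putting a = x g / f, the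
  almost Riordan array (a; g, f) is just the Riordan array (a, f), since its k-th column
  for k \<ge> 1 is x g f^(k-1) = a f^k. Composing x g = a f with f and using f \<circ> f = x gives
  x f a (a \<circ> f) = x f g (g \<circ> f) = x f, hence a (a \<circ> f) = 1, and (a, f) is an involution.\<close>

unbundle fps_syntax

lemma riordan_fundamental_theorem:
  fixes f g h :: "'a::comm_ring_1 fps"
  assumes f0: "f $ 0 = 0"
  shows "(\<Sum>j\<le>n. riordan_matrix g f n j * h $ j) = (g * (h oo f)) $ n"
proof -
  have vanish: "(f ^ j) $ m = 0" if "m < j" for j m
    using startsby_zero_power_prefix[OF f0] that by blast
  have "(g * (h oo f)) $ n = (\<Sum>i=0..n. g $ i * (\<Sum>j=0..n-i. h $ j * (f ^ j) $ (n-i)))"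
    by (simp add: fps_mult_nth fps_compose_nth)
  also have "\<dots> = (\<Sum>i=0..n. \<Sum>j=0..n. g $ i * h $ j * (f ^ j) $ (n-i))"
  proof (rule sum.cong[OF refl])
    fix i
    have "(\<Sum>j=0..n-i. h $ j * (f ^ j) $ (n-i)) = (\<Sum>j=0..n. h $ j * (f ^ j) $ (n-i))"
      by (rule sum.mono_neutral_left) (auto simp: vanish)
    then show "g $ i * (\<Sum>j=0..n-i. h $ j * (f ^ j) $ (n-i))
        = (\<Sum>j=0..n. g $ i * h $ j * (f ^ j) $ (n-i))"
      by (simp add: sum_distrib_left mult.assoc)
  qed
  also have "\<dots> = (\<Sum>j=0..n. \<Sum>i=0..n. g $ i * h $ j * (f ^ j) $ (n-i))"
    by (rule sum.swap)
  also have "\<dots> = (\<Sum>j\<le>n. riordan_matrix g f n j * h $ j)"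
    unfolding riordan_matrix_def atLeast0AtMost fps_mult_nth sum_distrib_right
    by (intro sum.cong refl) (simp add: ac_simps)
  finally show ?thesis ..
qed

lemma lt_mult_riordan_matrix:
  fixes f g h l :: "'a::idom fps"
  assumes f0: "f $ 0 = 0"
  shows "lt_mult (riordan_matrix g f) (riordan_matrix h l)
       = riordan_matrix (g * (h oo f)) (l oo f)"
proof (intro ext)
  fix n k
  have "lt_mult (riordan_matrix g f) (riordan_matrix h l) n k = (g * ((h * l ^ k) oo f)) $ n"
    unfolding lt_mult_def
    by (simp add: riordan_matrix_def[of h l] riordan_fundamental_theorem[OF f0])
  then show "lt_mult (riordan_matrix g f) (riordan_matrix h l) n k
      = riordan_matrix (g * (h oo f)) (l oo f) n k"
    by (simp add: riordan_matrix_def fps_compose_mult_distrib[OF f0]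
        fps_compose_power[OF f0] mult.assoc)
qed

lemma riordan_matrix_eq_lt_id_iff:
  fixes f g :: "'a::comm_ring_1 fps"
  shows "riordan_matrix g f = lt_id \<longleftrightarrow> g = 1 \<and> f = fps_X"
proof
  assume id: "riordan_matrix g f = lt_id"
  have "riordan_matrix g f n k = lt_id n k" for n k
    using id by simp
  then have col: "g * f ^ k = fps_X ^ k" for k
    by (intro fps_ext) (simp add: riordan_matrix_def lt_id_def)
  from col[of 0] col[of 1] show "g = 1 \<and> f = fps_X" by simp
next
  assume "g = 1 \<and> f = fps_X"
  then show "riordan_matrix g f = lt_id"
    by (intro ext) (simp add: riordan_matrix_def lt_id_def)
qed

lemma is_involution_riordan_matrix_iff:
  fixes f g :: "'a::idom fps"
  assumes "f $ 0 = 0"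
  shows "is_involution (riordan_matrix g f) \<longleftrightarrow> g * (g oo f) = 1 \<and> f oo f = fps_X"
  unfolding is_involution_def lt_mult_riordan_matrix[OF assms] riordan_matrix_eq_lt_id_iff ..

lemma almost_riordan_matrix_eq_riordan_matrix:
  fixes a g f :: "'a::comm_ring_1 fps"
  assumes f0: "f $ 0 = 0" and Xg: "fps_X * g = a * f"
  shows "almost_riordan_matrix a g f = riordan_matrix a f"
proof (intro ext)
  fix n k
  show "almost_riordan_matrix a g f n k = riordan_matrix a f n k"
  proof (cases k)
    case (Suc k')
    have "a * f ^ k = (a * f) * f ^ k'"
      using Suc by (simp add: mult.assoc)
    also have "\<dots> = fps_X * (g * f ^ k')"
      by (simp add: Xg[symmetric] mult.assoc)
    finally have "a * f ^ k = fps_X * (g * f ^ k')" .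
    then show ?thesis
      using Suc f0 by (cases n) (simp_all add: almost_riordan_matrix_def riordan_matrix_def)
  qed (simp add: almost_riordan_matrix_def riordan_matrix_def)
qed

lemma is_involution_almost_riordan_matrix:
  fixes a g f :: "'a::idom fps"
  assumes f0: "f $ 0 = 0" and Xg: "fps_X * g = a * f"
    and inv: "is_involution (riordan_matrix g f)"
  shows "is_involution (almost_riordan_matrix a g f)"
proof -
  from inv have gg: "g * (g oo f) = 1" and ff: "f oo f = fps_X"
    using is_involution_riordan_matrix_iff[OF f0] by auto
  have "f \<noteq> 0"
    using ff by auto
  have composed: "f * (g oo f) = (a oo f) * fps_X"
    using arg_cong[OF Xg, of "\<lambda>p. p oo f"] by (simp add: fps_compose_mult_distrib[OF f0] ff f0)
  have "fps_X * f * (a * (a oo f)) = (a * f) * ((a oo f) * fps_X)"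
    by (simp add: ac_simps)
  also have "\<dots> = (fps_X * g) * (f * (g oo f))"
    using Xg composed by simp
  also have "\<dots> = fps_X * f * 1"
    using gg by (simp add: ac_simps)
  finally have "a * (a oo f) = 1"
    using \<open>f \<noteq> 0\<close> by (subst (asm) mult_left_cancel) simp_all
  with ff have "is_involution (riordan_matrix a f)"
    using is_involution_riordan_matrix_iff[OF f0] by blast
  then show ?thesis
    by (simp add: almost_riordan_matrix_eq_riordan_matrix[OF f0 Xg])
qed

lemma fps_power_int_add_1:
  fixes u :: "'a::field fps"
  assumes "u $ 0 \<noteq> 0"
  shows "u powi (m + 1) = u powi m * u"
proof (cases "m \<ge> 0")
  case True
  then have "nat (m + 1) = Suc (nat m)" by simp
  then show ?thesis using True by (simp add: power_int_def mult.commute)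
next
  case False
  define n where "n = nat (- m) - 1"
  have n: "m = - int (Suc n)"
    using False unfolding n_def by simp
  then have "nat (- m) = Suc n" "nat (- (m + 1)) = n" by simp_all
  moreover have "inverse u * u = 1" using assms by (rule inverse_mult_eq_1)
  ultimately show ?thesis using n
    by (simp add: power_int_def fps_inverse_mult mult.assoc)
qed

theorem mainTheorem11:
  fixes f :: "rat fps" and \<rho> \<sigma> \<pi> :: int
  assumes int_coeffs: "\<forall>n. fps_nth f n \<in> \<int>"
    and f0: "fps_nth f 0 = 0"
    and f'0: "fps_nth (fps_deriv f) 0 \<in> {1, -1}"
    and inv: "is_involution (riordan_matrix
                 ((f / fps_X) powi \<rho> * (fps_deriv f) powi \<sigma>
                    * ((f - 1) / (fps_X - 1)) powi \<pi>) f)"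
  shows "is_involution (almost_riordan_matrix
            ((f / fps_X) powi (\<rho> - 1) * (fps_deriv f) powi \<sigma>
               * ((f - 1) / (fps_X - 1)) powi \<pi>)
            ((f / fps_X) powi \<rho> * (fps_deriv f) powi \<sigma>
               * ((f - 1) / (fps_X - 1)) powi \<pi>)
            f)"
proof -
  define u where "u = f / fps_X"
  define c where "c = (fps_deriv f) powi \<sigma> * ((f - 1) / (fps_X - 1)) powi \<pi>"
  have "u $ 0 \<noteq> 0"
    using f'0 by (auto simp: u_def fps_deriv_nth)
  then have "u powi \<rho> = u powi (\<rho> - 1) * u"
    using fps_power_int_add_1[of u "\<rho> - 1"] by simp
  moreover have "fps_X * u = f"
    by (rule fps_ext) (simp add: u_def f0)
  ultimately have "fps_X * (u powi \<rho> * c) = (u powi (\<rho> - 1) * c) * f"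
    by (simp add: ac_simps)
  from is_involution_almost_riordan_matrix[OF f0 this] inv show ?thesis
    by (simp add: u_def c_def mult.assoc)
qed

end
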